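(* For every integer $k\ge 1$, every vertex of every graph $G$ with $\mathrm{adim}(G)=k$ has degree at most $k+2^k-1$. Moreover, there exists a graph $G$ with $\mathrm{adim}(G)=k$ having a vertex of degree exactly $k+2^k-1$.
   Context: $d(x,y)$ is the length of a shortest $x$–$y$ path, with $d(x,y)=\infty$ if $x,y$ lie in different components. Let $d_1(x,y)=\min\{d(x,y),2\}$. A set $A\subseteq V(G)$ is an adjacency resolving set if for all distinct $x,y\in V(G)$ there is $z\in A$ with $d_1(x,z)\ne d_1(y,z)$. The adjacency dimension $\mathrm{adim}(G)$ is the minimum size of an adjacency resolving set. *)

theory Defs
  imports Main "HOL-Library.Extended_Nat"
begin

definition simple_graph :: "'a set \<Rightarrow> ('a \<Rightarrow> 'a \<Rightarrow> bool) \<Rightarrow> bool" where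
  "simple_graph V E \<longleftrightarrow> finite V \<and>
     (\<forall>x y. E x y \<longrightarrow> x \<in> V \<and> y \<in> V) \<and>
     (\<forall>x y. E x y \<longrightarrow> E y x) \<and> (\<forall>x. \<not> E x x)"

definition degree :: "'a set \<Rightarrow> ('a \<Rightarrow> 'a \<Rightarrow> bool) \<Rightarrow> 'a \<Rightarrow> nat" where
  "degree V E v = card {u \<in> V. E v u}"

definition is_walk :: "'a set \<Rightarrow> ('a \<Rightarrow> 'a \<Rightarrow> bool) \<Rightarrow> 'a list \<Rightarrow> bool" where
  "is_walk V E p \<longleftrightarrow> p \<noteq> [] \<and> set p \<subseteq> V \<and>
     (\<forall>i. Suc i < length p \<longrightarrow> E (p ! i) (p ! Suc i))"

text \<open>Shortest-path distance, \<infinity> if no walk exists.\<close>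
definition dist :: "'a set \<Rightarrow> ('a \<Rightarrow> 'a \<Rightarrow> bool) \<Rightarrow> 'a \<Rightarrow> 'a \<Rightarrow> enat" where
  "dist V E x y = Inf {enat (length p - 1) | p. is_walk V E p \<and> hd p = x \<and> last p = y}"

definition dist1 :: "'a set \<Rightarrow> ('a \<Rightarrow> 'a \<Rightarrow> bool) \<Rightarrow> 'a \<Rightarrow> 'a \<Rightarrow> enat" where
  "dist1 V E x y = min (dist V E x y) 2"

definition adj_resolving :: "'a set \<Rightarrow> ('a \<Rightarrow> 'a \<Rightarrow> bool) \<Rightarrow> 'a set \<Rightarrow> bool" where
  "adj_resolving V E A \<longleftrightarrow> A \<subseteq> V \<and>
     (\<forall>x\<in>V. \<forall>y\<in>V. x \<noteq> y \<longrightarrow> (\<exists>z\<in>A. dist1 V E x z \<noteq> dist1 V E y z))"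

definition adim :: "'a set \<Rightarrow> ('a \<Rightarrow> 'a \<Rightarrow> bool) \<Rightarrow> nat" where
  "adim V E = Min {card A | A. adj_resolving V E A}"

end

theory Submission
  imports Defs
begin

text \<open>A vertex outside an adjacency resolving set R is determined by its set of neighbours in R,
  since every vertex of R is at distance 1 or at least 2 from it. Hence a graph with
  \<open>adim = k\<close> has at most \<open>k + 2^k\<close> vertices, and every degree is at most \<open>k + 2^k - 1\<close>.
  Equality is attained by \<open>k\<close> landmarks together with one vertex for every subset of them,
  adjacent to exactly that subset; the vertex of the full subset is moreover joined to all
  other vertices, which leaves the landmarks resolving.\<close>

lemma dist_le_walk_length:
  assumes "is_walk V E p" "hd p = x" "last p = y"
  shows "dist V E x y \<le> enat (length p - 1)"
  unfolding dist_def using assms by (intro Inf_lower) blast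

lemma dist_enatE:
  assumes "dist V E x y = enat n"
  obtains p where "is_walk V E p" "hd p = x" "last p = y" "length p = Suc n"
proof -
  let ?S = "{enat (length p - 1) | p. is_walk V E p \<and> hd p = x \<and> last p = y}"
  have "?S \<noteq> {}"
  proof
    assume "?S = {}"
    then have "dist V E x y = \<infinity>" unfolding dist_def by (simp add: Inf_enat_def)
    with assms show False by simp
  qed
  then have "Inf ?S \<in> ?S"
    unfolding Inf_enat_def by (auto intro: LeastI)
  then obtain p where p: "is_walk V E p" "hd p = x" "last p = y" "length p - 1 = n"
    using assms unfolding dist_def by auto
  then have "length p = Suc n" by (cases p) (auto simp: is_walk_def)
  with p show thesis by (intro that)
qed

lemma dist_self: "x \<in> V \<Longrightarrow> dist V E x x = 0"
  using dist_le_walk_length[of V E "[x]"] by (simp add: is_walk_def flip: zero_enat_def)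

lemma dist_eq_0_imp_eq: "dist V E x y = 0 \<Longrightarrow> x = y"
  unfolding zero_enat_def by (erule dist_enatE) (auto simp: length_Suc_conv)

lemma dist_eq_1_imp_adjacent:
  assumes "dist V E x y = 1"
  shows "E x y"
proof -
  obtain p where p: "is_walk V E p" "hd p = x" "last p = y" "length p = 2"
    using assms by (auto simp: one_enat_def elim: dist_enatE)
  then obtain a b where "p = [a, b]"
    by (auto simp: length_Suc_conv numeral_2_eq_2)
  with p show ?thesis by (auto simp: is_walk_def)
qed

lemma dist1_self: "x \<in> V \<Longrightarrow> dist1 V E x x = 0"
  by (simp add: dist1_def dist_self)

lemma dist1_neq_0: "x \<noteq> y \<Longrightarrow> dist1 V E x y \<noteq> 0"
  unfolding dist1_def using dist_eq_0_imp_eq[of V E x y] by (metis min_def zero_neq_numeral)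

lemma dist1_cases: "dist1 V E x y \<in> {0, 1, 2}"
  unfolding dist1_def
  by (cases "dist V E x y") (auto simp: min_def zero_enat_def one_enat_def numeral_eq_enat)

lemma dist1_eq_1_iff:
  assumes "simple_graph V E"
  shows "dist1 V E x y = 1 \<longleftrightarrow> E x y"
proof
  assume "dist1 V E x y = 1"
  then have "dist V E x y = 1" unfolding dist1_def
    by (cases "dist V E x y") (auto simp: min_def one_enat_def numeral_eq_enat split: if_splits)
  then show "E x y" by (rule dist_eq_1_imp_adjacent)
next
  assume e: "E x y"
  with assms have "x \<in> V" "y \<in> V" "x \<noteq> y" unfolding simple_graph_def by metis+
  with e have "is_walk V E [x, y]" by (auto simp: is_walk_def nth_Cons split: nat.splits)
  then have "dist V E x y \<le> 1"
    using dist_le_walk_length[of V E "[x, y]"] by (simp add: one_enat_def)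
  moreover have "dist V E x y \<noteq> 0" using \<open>x \<noteq> y\<close> dist_eq_0_imp_eq by metis
  ultimately have "dist V E x y = 1"
    by (cases "dist V E x y") (auto simp: one_enat_def zero_enat_def)
  then show "dist1 V E x y = 1" by (simp add: dist1_def)
qed

lemma card_le_adj_resolving:
  assumes "finite V" and resolving: "adj_resolving V E R"
  shows "card V \<le> card R + 2 ^ card R"
proof -
  have "R \<subseteq> V" using resolving by (simp add: adj_resolving_def)
  then have "finite R" using \<open>finite V\<close> by (rule finite_subset)
  let ?trace = "\<lambda>u. {z \<in> R. dist1 V E u z = 1}"
  have "inj_on ?trace (V - R)"
  proof (rule inj_onI, rule ccontr)
    fix u w assume u: "u \<in> V - R" and w: "w \<in> V - R" and eq: "?trace u = ?trace w" and "u \<noteq> w"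
    from resolving u w \<open>u \<noteq> w\<close> obtain z where z: "z \<in> R" "dist1 V E u z \<noteq> dist1 V E w z"
      unfolding adj_resolving_def by blast
    with u w have "u \<noteq> z" "w \<noteq> z" by auto
    then have "dist1 V E u z \<noteq> 0" "dist1 V E w z \<noteq> 0" by (simp_all add: dist1_neq_0)
    moreover have "dist1 V E u z = 1 \<longleftrightarrow> dist1 V E w z = 1"
      using eq z(1) by (auto simp: set_eq_iff)
    ultimately show False
      using z(2) dist1_cases[of V E u z] dist1_cases[of V E w z] by auto
  qed
  moreover have "?trace ` (V - R) \<subseteq> Pow R" by auto
  ultimately have "card (V - R) \<le> card (Pow R)"
    using \<open>finite R\<close> by (simp add: card_inj_on_le)
  then have "card (V - R) \<le> 2 ^ card R"
    using \<open>finite R\<close> by (simp add: card_Pow)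
  moreover have "card V = card R + card (V - R)"
    using \<open>finite V\<close> \<open>R \<subseteq> V\<close> by (metis card_Diff_subset card_mono le_add_diff_inverse finite_subset)
  ultimately show ?thesis by simp
qed

lemma adj_resolving_vertices: "adj_resolving V E V"
  unfolding adj_resolving_def
proof (intro conjI ballI impI subset_refl)
  fix x y assume "x \<in> V" "y \<in> V" "x \<noteq> y"
  then have "dist1 V E x x \<noteq> dist1 V E y x" using dist1_self dist1_neq_0 by metis
  with \<open>x \<in> V\<close> show "\<exists>z\<in>V. dist1 V E x z \<noteq> dist1 V E y z" by blast
qed

lemma finite_adj_resolving_cards:
  "finite V \<Longrightarrow> finite {card A | A. adj_resolving V E A}"
  by (rule finite_subset[of _ "{..card V}"]) (auto simp: adj_resolving_def intro: card_mono)

lemma adim_attained: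
  assumes "finite V"
  obtains R where "adj_resolving V E R" "card R = adim V E"
proof -
  have "adim V E \<in> {card A | A. adj_resolving V E A}"
    unfolding adim_def using assms adj_resolving_vertices
    by (intro Min_in finite_adj_resolving_cards) auto
  then show thesis using that by auto
qed

lemma adim_le_card:
  "finite V \<Longrightarrow> adj_resolving V E A \<Longrightarrow> adim V E \<le> card A"
  unfolding adim_def by (intro Min_le finite_adj_resolving_cards) auto

lemma card_le_adim_add_pow:
  assumes "finite V"
  shows "card V \<le> adim V E + 2 ^ adim V E"
proof -
  obtain R where R: "adj_resolving V E R" "card R = adim V E"
    using adim_attained[OF assms] .
  from card_le_adj_resolving[OF assms R(1)] show ?thesis by (simp add: R(2))
qed

lemma degree_le_card_minus_1:
  assumes "simple_graph V E" "v \<in> V"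
  shows "degree V E v \<le> card V - 1"
proof -
  have "finite V" using assms by (simp add: simple_graph_def)
  moreover have "{u \<in> V. E v u} \<subseteq> V - {v}" using assms by (auto simp: simple_graph_def)
  ultimately have "degree V E v \<le> card (V - {v})"
    unfolding degree_def by (intro card_mono) auto
  also have "\<dots> = card V - 1" using \<open>finite V\<close> \<open>v \<in> V\<close> by simp
  finally show ?thesis .
qed

lemma degree_le_adim:
  assumes "simple_graph V E" "v \<in> V"
  shows "degree V E v \<le> adim V E + 2 ^ adim V E - 1"
  using degree_le_card_minus_1[OF assms] card_le_adim_add_pow[of V E] assms
  by (simp add: simple_graph_def)

lemma strict_mono_add_pow2: "strict_mono (\<lambda>n::nat. n + 2 ^ n)"
  by (rule strict_monoI) (simp add: add_less_mono power_strict_increasing)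

text \<open>Vertex \<open>i < k\<close> is the i-th landmark, vertex \<open>k + n\<close> with \<open>n < 2^k\<close> is adjacent to the
  landmarks given by the bits of \<open>n\<close>; the last vertex \<open>k + 2^k - 1\<close> (all bits set) is the
  hub, adjacent to every other vertex.\<close>

definition landmark_vertices :: "nat \<Rightarrow> nat set" where
  "landmark_vertices k = {..<k + 2 ^ k}"

definition landmark_arc :: "nat \<Rightarrow> nat \<Rightarrow> nat \<Rightarrow> bool" where
  "landmark_arc k x y \<longleftrightarrow> (x < k \<and> k \<le> y \<and> bit (y - k) x) \<or> (x = k + 2 ^ k - 1 \<and> k \<le> y)"

definition landmark_edge :: "nat \<Rightarrow> nat \<Rightarrow> nat \<Rightarrow> bool" where
  "landmark_edge k x y \<longleftrightarrow> x \<in> landmark_vertices k \<and> y \<in> landmark_vertices k \<and> x \<noteq> y \<and>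
     (landmark_arc k x y \<or> landmark_arc k y x)"

abbreviation "landmark_hub k \<equiv> k + 2 ^ k - 1"

lemma simple_graph_landmark: "simple_graph (landmark_vertices k) (landmark_edge k)"
  unfolding simple_graph_def landmark_edge_def by (auto simp: landmark_vertices_def)

lemma landmark_edge_landmark_iff:
  assumes "k \<le> x" "x \<in> landmark_vertices k" "i < k"
  shows "landmark_edge k x i \<longleftrightarrow> bit (x - k) i"
  using assms by (auto simp: landmark_edge_def landmark_arc_def landmark_vertices_def)

lemma bit_differs_below:
  fixes n m :: nat
  assumes "n < 2 ^ k" "m < 2 ^ k" "n \<noteq> m"
  obtains i where "i < k" "bit n i \<noteq> bit m i"
proof -
  have "take_bit k n = n" "take_bit k m = m"
    using assms by (simp_all add: take_bit_nat_eq_self_iff)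
  moreover obtain i where "bit n i \<noteq> bit m i" using assms(3) bit_eq_iff by blast
  ultimately show thesis using that by (metis bit_take_bit_iff)
qed

lemma adj_resolving_landmarks:
  "adj_resolving (landmark_vertices k) (landmark_edge k) {..<k}"
  unfolding adj_resolving_def
proof (intro conjI ballI impI)
  show "{..<k} \<subseteq> landmark_vertices k" by (auto simp: landmark_vertices_def)
next
  fix x y assume x: "x \<in> landmark_vertices k" and y: "y \<in> landmark_vertices k" and "x \<noteq> y"
  let ?d1 = "dist1 (landmark_vertices k) (landmark_edge k)"
  show "\<exists>z\<in>{..<k}. ?d1 x z \<noteq> ?d1 y z"
  proof (cases "x < k \<or> y < k")
    case True
    then show ?thesis
      using x y \<open>x \<noteq> y\<close> dist1_self dist1_neq_0 by (metis lessThan_iff)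
  next
    case False
    then have "x - k < 2 ^ k" "y - k < 2 ^ k" "x - k \<noteq> y - k"
      using x y \<open>x \<noteq> y\<close> by (auto simp: landmark_vertices_def)
    then obtain i where i: "i < k" "bit (x - k) i \<noteq> bit (y - k) i"
      by (rule bit_differs_below)
    then have "landmark_edge k x i \<noteq> landmark_edge k y i"
      using False x y landmark_edge_landmark_iff by auto
    then have "?d1 x i \<noteq> ?d1 y i"
      using dist1_eq_1_iff[OF simple_graph_landmark] by metis
    with i show ?thesis by blast
  qed
qed

lemma adim_landmark: "adim (landmark_vertices k) (landmark_edge k) = k" (is "?a = k")
proof (rule antisym)
  show "?a \<le> k"
    using adim_le_card[OF _ adj_resolving_landmarks] by (simp add: landmark_vertices_def)
  have "k + 2 ^ k \<le> ?a + 2 ^ ?a"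
    using card_le_adim_add_pow[of "landmark_vertices k"] by (simp add: landmark_vertices_def)
  then show "k \<le> ?a"
    using strict_mono_less_eq[OF strict_mono_add_pow2] by blast
qed

lemma degree_landmark_hub:
  "degree (landmark_vertices k) (landmark_edge k) (landmark_hub k) = landmark_hub k"
proof -
  have "landmark_edge k (landmark_hub k) u" if "u \<in> landmark_vertices k - {landmark_hub k}" for u
  proof (cases "u < k")
    case True
    then have "bit (mask k :: nat) u" by (simp add: bit_mask_iff)
    then have "bit ((2::nat) ^ k - 1) u" by (simp add: mask_eq_exp_minus_1)
    moreover have "k \<le> landmark_hub k" "landmark_hub k - k = 2 ^ k - 1"
      using one_le_power[of "2::nat" k] by linarith+
    ultimately have "landmark_arc k u (landmark_hub k)"
      using True by (simp add: landmark_arc_def)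
    with that show ?thesis by (auto simp: landmark_edge_def landmark_vertices_def)
  next
    case False
    with that show ?thesis by (auto simp: landmark_edge_def landmark_arc_def landmark_vertices_def)
  qed
  then have "{u \<in> landmark_vertices k. landmark_edge k (landmark_hub k) u}
      = landmark_vertices k - {landmark_hub k}"
    by (auto simp: landmark_edge_def)
  then show ?thesis unfolding degree_def by (simp add: landmark_vertices_def)
qed

theorem corollary3p6:
  fixes k :: nat
  assumes "k \<ge> 1"
  shows "(\<forall>(V :: 'a set) E. simple_graph V E \<and> adim V E = k \<longrightarrow>
            (\<forall>v\<in>V. degree V E v \<le> k + 2 ^ k - 1))
       \<and> (\<exists>(V :: nat set) E v. simple_graph V E \<and> adim V E = k \<and> v \<in> V \<and>
            degree V E v = k + 2 ^ k - 1)"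
proof
  show "\<forall>(V :: 'a set) E. simple_graph V E \<and> adim V E = k \<longrightarrow>
          (\<forall>v\<in>V. degree V E v \<le> k + 2 ^ k - 1)"
    using degree_le_adim by (intro allI impI ballI) auto
  have "landmark_hub k \<in> landmark_vertices k" by (simp add: landmark_vertices_def)
  then show "\<exists>(V :: nat set) E v. simple_graph V E \<and> adim V E = k \<and> v \<in> V \<and>
          degree V E v = k + 2 ^ k - 1"
    using simple_graph_landmark adim_landmark degree_landmark_hub by blast
qed

end
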